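(* Let $\xi$ be any boundary condition, $\sigma\in\Omega^\xi$ and $x\in F_{\mathrm{dec}}(\sigma)\cup F_{\mathrm{diag}}(\sigma)$. Let $\Delta_1=(\sigma_{y_1},\sigma_{z_1},\sigma_{w_1})$ and $\Delta_2=(\sigma_{y_2},\sigma_{z_2},\sigma_{w_2})$ be triangles of $\sigma$ with $|\sigma_{y_1}|>|\sigma_{z_1}|\ge|\sigma_{w_1}|$ and $|\sigma_{y_2}|>|\sigma_{z_2}|\ge|\sigma_{w_2}|$, such that for $i=1,2$ the midpoints $y_i,z_i,w_i$ belong to $\tau(\sigma,x)$ with $z_i,w_i$ children of $y_i$, and such that $y_1$ is an ancestor of $y_2$ in $\tau(\sigma,x)$. Then $|\sigma_{w_1}|\ge|\sigma_{w_2}|$.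
   Context: Let $P$ be a lattice polygon (a simple polygon whose vertices lie in $\mathbb{Z}^2$ and whose sides contain no points of $\mathbb{Z}^2$ other than their endpoints) and let $\Lambda^0$ be the set of points of $\mathbb{Z}^2$ in $P$ (including its boundary). Edges are open straight line segments with endpoints in $\Lambda^0$; $|e|$ denotes the $\ell_1$ length of an edge $e$. A triangulation of $\Lambda^0$ is a maximal collection of pairwise disjoint edges none of which contains a point of $\Lambda^0$; the set $\Lambda$ of midpoints of its edges does not depend on the triangulation, and $\sigma_x$ denotes the edge of $\sigma$ of midpoint $x$. A boundary condition $\xi$ is a set of pairwise disjoint edges containing no point of $\Lambda^0$ and containing all sides of $P$; $\Omega^\xi$ is the set of triangulations containing every edge of $\xi$. In each triangle of a triangulation there is a unique longest edge (in $\ell_1$ length). A unit diagonal is a diagonal of a unit square of $\mathbb{Z}^2$. $F_{\mathrm{dec}}(\sigma)$ is the set of $x\in\Lambda$ such that $\sigma_x$ is not a unit diagonal and is the longest edge of every triangle of $\sigma$ containing it; $F_{\mathrm{diag}}(\sigma)$ is the set of $x$ such that $\sigma_x$ is a unit diagonal and is the longest edge of every triangle of $\sigma$ containing it. Tree of influence: for $x\in F_{\mathrm{dec}}(\sigma)\cup F_{\mathrm{diag}}(\sigma)$ and a triangle $\Delta$ of $\sigma$ containing $\sigma_x$, the rooted structure $\tau^\Delta(\sigma,x)$ on midpoints is built as follows: its root is $x$ and the children of $x$ are the midpoints of the other two edges of $\Delta$; inductively, for a vertex $y$ with parent $z$, let $\Delta'$ be the triangle of $\sigma$ containing $\sigma_y$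 but not $\sigma_z$; if $\Delta'$ exists and $\sigma_y$ is its longest edge, the children of $y$ are the midpoints of the two other edges of $\Delta'$, otherwise $y$ has no children. $\tau(\sigma,x)$ is the union over the (one or two) triangles $\Delta$ containing $\sigma_x$ of $\tau^\Delta(\sigma,x)$, rooted at $x$ (it is a tree); ancestors refer to parent-to-child paths. *)

theory Defs
  imports "HOL-Analysis.Analysis"
begin

type_synonym lpt = "int \<times> int"

definition rp :: "lpt \<Rightarrow> real \<times> real" where
  "rp a = (real_of_int (fst a), real_of_int (snd a))"

text \<open>Polygon given by its cyclic list of vertices vs; side i joins vs!i and vs!((i+1) mod n).\<close>
definition pside :: "lpt list \<Rightarrow> nat \<Rightarrow> (real \<times> real) set" where
  "pside vs i = closed_segment (rp (vs ! i)) (rp (vs ! (Suc i mod length vs)))"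

definition lattice_polygon :: "lpt list \<Rightarrow> bool" where
  "lattice_polygon vs \<longleftrightarrow>
     length vs \<ge> 3 \<and> distinct vs \<and>
     (\<forall>i<length vs. \<forall>j<length vs. i \<noteq> j \<longrightarrow>
        pside vs i \<inter> pside vs j =
          (if j = Suc i mod length vs then {rp (vs ! j)}
           else if i = Suc j mod length vs then {rp (vs ! i)} else {})) \<and>
     (\<forall>i<length vs. \<forall>p. rp p \<in> pside vs i \<longrightarrow>
        p = vs ! i \<or> p = vs ! (Suc i mod length vs))"

definition pboundary :: "lpt list \<Rightarrow> (real \<times> real) set" where
  "pboundary vs = (\<Union>i<length vs. pside vs i)"

definition pregion :: "lpt list \<Rightarrow> (real \<times> real) set" where
  "pregion vs = pboundary vs \<union> inside (pboundary vs)"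

definition lattice_pts :: "lpt list \<Rightarrow> lpt set" where
  "lattice_pts vs = {p. rp p \<in> pregion vs}"

text \<open>Edges are represented by the (unordered) set of their two endpoints.\<close>
definition oseg :: "lpt set \<Rightarrow> (real \<times> real) set" where
  "oseg e = (THE S. \<exists>a b. e = {a, b} \<and> S = open_segment (rp a) (rp b))"

definition mid :: "lpt set \<Rightarrow> real \<times> real" where
  "mid e = (THE m. \<exists>a b. e = {a, b} \<and> m = midpoint (rp a) (rp b))"

definition l1len :: "lpt set \<Rightarrow> int" where
  "l1len e = (THE n. \<exists>a b. e = {a, b} \<and> n = \<bar>fst a - fst b\<bar> + \<bar>snd a - snd b\<bar>)"

definition unit_diag :: "lpt set \<Rightarrow> bool" where
  "unit_diag e \<longleftrightarrow> (\<exists>a b. e = {a, b} \<and> \<bar>fst a - fst b\<bar> = 1 \<and> \<bar>snd a - snd b\<bar> = 1)"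

definition valid_edge :: "lpt list \<Rightarrow> lpt set \<Rightarrow> bool" where
  "valid_edge vs e \<longleftrightarrow>
     (\<exists>a b. e = {a, b} \<and> a \<noteq> b \<and> a \<in> lattice_pts vs \<and> b \<in> lattice_pts vs) \<and>
     oseg e \<inter> rp ` lattice_pts vs = {} \<and> oseg e \<subseteq> pregion vs"

definition pairwise_disj :: "lpt set set \<Rightarrow> bool" where
  "pairwise_disj E \<longleftrightarrow> (\<forall>e\<in>E. \<forall>f\<in>E. e \<noteq> f \<longrightarrow> oseg e \<inter> oseg f = {})"

definition triangulation :: "lpt list \<Rightarrow> lpt set set \<Rightarrow> bool" where
  "triangulation vs \<sigma> \<longleftrightarrow>
     (\<forall>e\<in>\<sigma>. valid_edge vs e) \<and> pairwise_disj \<sigma> \<and>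
     (\<forall>e. valid_edge vs e \<and> e \<notin> \<sigma> \<longrightarrow> (\<exists>f\<in>\<sigma>. oseg e \<inter> oseg f \<noteq> {}))"

definition boundary_condition :: "lpt list \<Rightarrow> lpt set set \<Rightarrow> bool" where
  "boundary_condition vs \<xi> \<longleftrightarrow>
     (\<forall>e\<in>\<xi>. valid_edge vs e) \<and> pairwise_disj \<xi> \<and>
     (\<forall>i<length vs. {vs ! i, vs ! (Suc i mod length vs)} \<in> \<xi>)"

definition Omega :: "lpt list \<Rightarrow> lpt set set \<Rightarrow> lpt set set set" where
  "Omega vs \<xi> = {\<sigma>. triangulation vs \<sigma> \<and> \<xi> \<subseteq> \<sigma>}"

text \<open>A triangle (face) of \<sigma>, given as the set of its three edges: its three sides are in \<sigma>
  and its interior meets no edge of \<sigma> and no point of \<Lambda>^0.\<close>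
definition tri_of :: "lpt list \<Rightarrow> lpt set set \<Rightarrow> lpt set set \<Rightarrow> bool" where
  "tri_of vs \<sigma> T \<longleftrightarrow>
     (\<exists>a b c. T = {{a, b}, {b, c}, {a, c}} \<and> \<not> collinear {rp a, rp b, rp c} \<and> T \<subseteq> \<sigma> \<and>
        interior (convex hull {rp a, rp b, rp c}) \<inter>
          (rp ` lattice_pts vs \<union> \<Union> (oseg ` \<sigma>)) = {})"

definition longest :: "lpt set set \<Rightarrow> lpt set \<Rightarrow> bool" where
  "longest T e \<longleftrightarrow> e \<in> T \<and> (\<forall>f\<in>T. f \<noteq> e \<longrightarrow> l1len f < l1len e)"

definition edge_at :: "lpt set set \<Rightarrow> real \<times> real \<Rightarrow> lpt set" where
  "edge_at \<sigma> x = (THE e. e \<in> \<sigma> \<and> mid e = x)"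

definition F_dec :: "lpt list \<Rightarrow> lpt set set \<Rightarrow> (real \<times> real) set" where
  "F_dec vs \<sigma> = {x \<in> mid ` \<sigma>. \<not> unit_diag (edge_at \<sigma> x) \<and>
      (\<forall>T. tri_of vs \<sigma> T \<and> edge_at \<sigma> x \<in> T \<longrightarrow> longest T (edge_at \<sigma> x))}"

definition F_diag :: "lpt list \<Rightarrow> lpt set set \<Rightarrow> (real \<times> real) set" where
  "F_diag vs \<sigma> = {x \<in> mid ` \<sigma>. unit_diag (edge_at \<sigma> x) \<and>
      (\<forall>T. tri_of vs \<sigma> T \<and> edge_at \<sigma> x \<in> T \<longrightarrow> longest T (edge_at \<sigma> x))}"

text \<open>Parent-to-child relation of the tree of influence \<tau>(\<sigma>,x) (union over the triangles
  containing \<sigma>_x of \<tau>^\<Delta>(\<sigma>,x)).\<close>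
inductive_set infl :: "lpt list \<Rightarrow> lpt set set \<Rightarrow> real \<times> real
    \<Rightarrow> ((real \<times> real) \<times> (real \<times> real)) set"
  for vs \<sigma> x where
  root: "\<lbrakk>tri_of vs \<sigma> T; edge_at \<sigma> x \<in> T; f \<in> T; f \<noteq> edge_at \<sigma> x\<rbrakk>
           \<Longrightarrow> (x, mid f) \<in> infl vs \<sigma> x"
| step: "\<lbrakk>(z, y) \<in> infl vs \<sigma> x; tri_of vs \<sigma> T; edge_at \<sigma> y \<in> T; edge_at \<sigma> z \<notin> T;
           longest T (edge_at \<sigma> y); f \<in> T; f \<noteq> edge_at \<sigma> y\<rbrakk>
           \<Longrightarrow> (y, mid f) \<in> infl vs \<sigma> x"

definition infl_nodes :: "lpt list \<Rightarrow> lpt set set \<Rightarrow> real \<times> real \<Rightarrow> (real \<times> real) set" where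
  "infl_nodes vs \<sigma> x = insert x (Range (infl vs \<sigma> x))"

end

theory Submission
  imports Defs
begin

(* Every triangle of the triangulation is unimodular: if its orientation determinant D were at
   least 2, reducing Cramer's coefficients modulo D would produce a lattice point in the closed
   triangle other than its vertices, which is impossible.  Now let PQR and PQS be adjacent
   triangles with PQ longest in PQS.  Unimodularity puts R and S on opposite sides of PQ, forces
   S - P and Q - S into a common closed quadrant, and gives R - P = (k - 1)(S - P) + k(Q - S) for
   an integer k, so every side of PQR is at least as long as the shortest side of PQS.  In the
   tree of influence every child edge arises in a triangle in which its parent edge is longest,
   so along the path from y1 to y2 the shortest side of the triangles met never grows. *)

lemma rp_eq_iff: "rp a = rp b \<longleftrightarrow> a = b"
  by (cases a; cases b) (simp add: rp_def)

lemma oseg_doubleton: "oseg {a, b} = open_segment (rp a) (rp b)"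
  unfolding oseg_def
  by (rule the_equality, blast, auto simp: doubleton_eq_iff open_segment_commute)

lemma mid_doubleton: "mid {a, b} = midpoint (rp a) (rp b)"
  unfolding mid_def
  by (rule the_equality, blast, auto simp: doubleton_eq_iff midpoint_sym)

lemma l1len_doubleton: "l1len {a, b} = \<bar>fst a - fst b\<bar> + \<bar>snd a - snd b\<bar>"
  unfolding l1len_def
  by (rule the_equality, blast, auto simp: doubleton_eq_iff abs_minus_commute)

lemma valid_edge_doubletonD:
  assumes "valid_edge vs {a, b}"
  shows "a \<noteq> b" "a \<in> lattice_pts vs" "b \<in> lattice_pts vs"
    "open_segment (rp a) (rp b) \<inter> rp ` lattice_pts vs = {}"
    "open_segment (rp a) (rp b) \<subseteq> pregion vs"
  using assms unfolding valid_edge_def oseg_doubleton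
  by (auto simp: doubleton_eq_iff)

lemma mid_in_oseg: "valid_edge vs e \<Longrightarrow> mid e \<in> oseg e"
  unfolding valid_edge_def by (auto simp: oseg_doubleton mid_doubleton rp_eq_iff)

lemma edge_at_mid:
  assumes "\<forall>e\<in>\<sigma>. valid_edge vs e" "pairwise_disj \<sigma>" "f \<in> \<sigma>"
  shows "edge_at \<sigma> (mid f) = f"
  unfolding edge_at_def
proof (rule the_equality)
  show "f \<in> \<sigma> \<and> mid f = mid f" using assms(3) by simp
  fix e assume e: "e \<in> \<sigma> \<and> mid e = mid f"
  then have "mid f \<in> oseg e \<inter> oseg f" using assms(1,3) mid_in_oseg by (metis IntI)
  then show "e = f" using assms(2) e assms(3) unfolding pairwise_disj_def by blast
qed

definition orient :: "lpt \<Rightarrow> lpt \<Rightarrow> lpt \<Rightarrow> int" where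
  "orient P Q R = (fst Q - fst P) * (snd R - snd P) - (snd Q - snd P) * (fst R - fst P)"

text \<open>A triangle of \<open>\<sigma>\<close> with named vertices; \<open>tri_of\<close> only sees the set of its edges.\<close>
definition face :: "lpt list \<Rightarrow> lpt set set \<Rightarrow> lpt \<Rightarrow> lpt \<Rightarrow> lpt \<Rightarrow> bool" where
  "face vs \<sigma> P Q R \<longleftrightarrow> \<not> collinear {rp P, rp Q, rp R} \<and> {{P, Q}, {Q, R}, {P, R}} \<subseteq> \<sigma> \<and>
     interior (convex hull {rp P, rp Q, rp R}) \<inter> (rp ` lattice_pts vs \<union> \<Union> (oseg ` \<sigma>)) = {}"

lemma face_swap12: "face vs \<sigma> P Q R \<Longrightarrow> face vs \<sigma> Q P R"
proof -
  have "{rp Q, rp P, rp R} = {rp P, rp Q, rp R}" "{{Q, P}, {P, R}, {Q, R}} = {{P, Q}, {Q, R}, {P, R}}"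
    by blast+
  then show "face vs \<sigma> P Q R \<Longrightarrow> face vs \<sigma> Q P R" unfolding face_def by simp
qed

lemma face_swap23: "face vs \<sigma> P Q R \<Longrightarrow> face vs \<sigma> P R Q"
proof -
  have "{rp P, rp R, rp Q} = {rp P, rp Q, rp R}" "{{P, R}, {R, Q}, {P, Q}} = {{P, Q}, {Q, R}, {P, R}}"
    by blast+
  then show "face vs \<sigma> P Q R \<Longrightarrow> face vs \<sigma> P R Q" unfolding face_def by simp
qed

lemma faceD:
  assumes "face vs \<sigma> P Q R"
  shows "\<not> collinear {rp P, rp Q, rp R}" "{P, Q} \<in> \<sigma>" "{Q, R} \<in> \<sigma>" "{P, R} \<in> \<sigma>"
    "interior (convex hull {rp P, rp Q, rp R}) \<inter> rp ` lattice_pts vs = {}"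
    "e \<in> \<sigma> \<Longrightarrow> interior (convex hull {rp P, rp Q, rp R}) \<inter> oseg e = {}"
  using assms unfolding face_def by blast+

lemma tri_of_edge_face:
  assumes "tri_of vs \<sigma> T" "e \<in> T"
  obtains P Q R where "e = {P, Q}" "T = {{P, Q}, {Q, R}, {P, R}}" "face vs \<sigma> P Q R"
proof -
  from assms(1) obtain a b c where T: "T = {{a, b}, {b, c}, {a, c}}" and f: "face vs \<sigma> a b c"
    using assms(1) unfolding tri_of_def face_def by metis
  consider "e = {a, b}" | "e = {b, c}" | "e = {a, c}" using assms(2) T by blast
  then show thesis
  proof cases
    case 1 then show ?thesis using that T f by blast
  next
    case 2 then show ?thesis
      using that[of b c a] T face_swap23[OF face_swap12[OF f]] by (simp add: insert_commute)
  next
    case 3 then show ?thesis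
      using that[of a c b] T face_swap23[OF f] by (simp add: insert_commute)
  qed
qed

lemma tri_of_subset: "tri_of vs \<sigma> T \<Longrightarrow> T \<subseteq> \<sigma>"
  unfolding tri_of_def by blast

lemma collinear_if_cross_eq_0:
  fixes x y :: "real \<times> real"
  assumes "fst x * snd y - snd x * fst y = 0"
  shows "collinear {0, x, y}"
proof -
  have "x = 0 \<or> (\<exists>c. y = c *\<^sub>R x)"
  proof (cases "fst x = 0")
    case True
    then show ?thesis
      using assms by (cases "snd x = 0") (auto simp: prod_eq_iff intro!: exI[of _ "snd y / snd x"])
  next
    case False
    then have "y = (fst y / fst x) *\<^sub>R x"
      using assms by (simp add: prod_eq_iff field_simps)
    then show ?thesis by blast
  qed
  then show ?thesis
    by (auto simp: collinear_lemma)
qed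

lemma collinear_if_orient_eq_0:
  assumes "orient P Q R = 0"
  shows "collinear {rp P, rp Q, rp R}"
proof -
  have "collinear {0, rp Q - rp P, rp R - rp P}"
    using assms by (intro collinear_if_cross_eq_0) (simp add: rp_def orient_def flip: of_int_diff of_int_mult)
  then have "collinear {rp Q, rp P, rp R}"
    using collinear_3[of "rp Q" "rp P" "rp R"] by simp
  then show ?thesis
    by (simp add: insert_commute)
qed

lemma interior_convex_hull_3_plane:
  fixes A B C :: "real \<times> real"
  assumes "\<not> collinear {A, B, C}"
  shows "interior (convex hull {A, B, C}) =
    {v. \<exists>x y z. 0 < x \<and> 0 < y \<and> 0 < z \<and> x + y + z = 1 \<and> x *\<^sub>R A + y *\<^sub>R B + z *\<^sub>R C = v}"
  using assms by (rule interior_convex_hull_3_minimal) simp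

lemma interior_convex_hull_3_point:
  fixes A B C :: "real \<times> real"
  assumes "\<not> collinear {A, B, C}" "0 < a" "0 < b" "a + b < 1"
  shows "A + a *\<^sub>R (B - A) + b *\<^sub>R (C - A) \<in> interior (convex hull {A, B, C})"
proof -
  have "A + a *\<^sub>R (B - A) + b *\<^sub>R (C - A) = (1 - a - b) *\<^sub>R A + a *\<^sub>R B + b *\<^sub>R C"
    by (simp add: algebra_simps)
  moreover have "(1 - a - b) *\<^sub>R A + a *\<^sub>R B + b *\<^sub>R C \<in> interior (convex hull {A, B, C})"
    unfolding interior_convex_hull_3_plane[OF assms(1)]
    using assms by (intro CollectI exI[of _ "1 - a - b"] exI[of _ a] exI[of _ b]) auto
  ultimately show ?thesis by simp
qed

lemma frontier_convex_hull_3_subset: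
  fixes A B C :: "real \<times> real"
  assumes "\<not> collinear {A, B, C}"
  shows "frontier (convex hull {A, B, C}) \<subseteq> closed_segment A B \<union> closed_segment B C \<union> closed_segment A C"
proof
  fix Y assume Y: "Y \<in> frontier (convex hull {A, B, C})"
  have "closed (convex hull {A, B, C})"
    by (simp add: compact_imp_closed finite_imp_compact_convex_hull)
  then have "Y \<in> convex hull {A, B, C}"
    using Y frontier_subset_closed by blast
  then obtain u v w where uvw: "Y = u *\<^sub>R A + v *\<^sub>R B + w *\<^sub>R C" "0 \<le> u" "0 \<le> v" "0 \<le> w" "u + v + w = 1"
    unfolding convex_hull_3 by blast
  have "Y \<notin> interior (convex hull {A, B, C})"
    using Y by (simp add: frontier_def)
  moreover have "Y \<in> interior (convex hull {A, B, C})" if "0 < u" "0 < v" "0 < w"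
    unfolding interior_convex_hull_3_plane[OF assms] using that uvw by blast
  ultimately have "u = 0 \<or> v = 0 \<or> w = 0"
    using uvw(2-4) by linarith
  then show "Y \<in> closed_segment A B \<union> closed_segment B C \<union> closed_segment A C"
  proof (elim disjE)
    assume "u = 0"
    then have "Y = (1 - w) *\<^sub>R B + w *\<^sub>R C" "0 \<le> w" "w \<le> 1"
      using uvw by auto
    then show ?thesis using in_segment(1)[of Y B C] by blast
  next
    assume "v = 0"
    then have "Y = (1 - w) *\<^sub>R A + w *\<^sub>R C" "0 \<le> w" "w \<le> 1"
      using uvw by auto
    then show ?thesis using in_segment(1)[of Y A C] by blast
  next
    assume "w = 0"
    then have "Y = (1 - v) *\<^sub>R A + v *\<^sub>R B" "0 \<le> v" "v \<le> 1"
      using uvw by auto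
    then show ?thesis using in_segment(1)[of Y A B] by blast
  qed
qed

text \<open>The unbounded component of \<open>-S\<close> through a point of the triangle must leave the triangle,
  hence cross its boundary, which is not outside \<open>S\<close>.\<close>
lemma convex_hull_3_disjoint_outside:
  fixes A B C :: "real \<times> real"
  assumes nc: "\<not> collinear {A, B, C}"
    and sides: "closed_segment A B \<union> closed_segment B C \<union> closed_segment A C \<subseteq> - outside S"
  shows "convex hull {A, B, C} \<inter> outside S = {}"
proof (rule ccontr)
  assume "convex hull {A, B, C} \<inter> outside S \<noteq> {}"
  then obtain X where X: "X \<in> convex hull {A, B, C}" "X \<in> outside S" by blast
  define K where "K = connected_component_set (- S) X"
  have K_unbounded: "\<not> bounded K"
    using X(2) by (simp add: outside K_def)
  have K_outside: "K \<subseteq> outside S"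
  proof
    fix y assume "y \<in> K"
    then have "connected_component_set (- S) y = K"
      unfolding K_def by (rule connected_component_eq)
    then show "y \<in> outside S" using K_unbounded by (simp add: outside)
  qed
  have "X \<in> - S"
    using X(2) outside_no_overlap[of S] by blast
  then have "X \<in> K"
    by (simp add: K_def connected_component_refl)
  have "bounded (convex hull {A, B, C})"
    by (simp add: finite_imp_bounded_convex_hull)
  then have "K - convex hull {A, B, C} \<noteq> {}"
    using K_unbounded bounded_subset by blast
  moreover have "K \<inter> convex hull {A, B, C} \<noteq> {}"
    using \<open>X \<in> K\<close> X(1) by blast
  ultimately have "K \<inter> frontier (convex hull {A, B, C}) \<noteq> {}"
    by (intro connected_Int_frontier) (simp_all add: K_def)
  then obtain Y where "Y \<in> K" "Y \<in> frontier (convex hull {A, B, C})"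
    by blast
  then have "Y \<in> outside S" "Y \<in> - outside S"
    using K_outside subsetD[OF sides] subsetD[OF frontier_convex_hull_3_subset[OF nc]] by blast+
  then show False by simp
qed

lemma lattice_combination_reduce:
  fixes u1 u2 v1 v2 e1 e2 a b D :: int
  assumes D: "D \<ge> 2" and h1: "D * e1 = a * u1 + b * v1" and h2: "D * e2 = a * u2 + b * v2"
    and nd: "\<not> (D dvd a \<and> D dvd b)"
  obtains p1 p2 m n where "D * p1 = m * u1 + n * v1" "D * p2 = m * u2 + n * v2"
    "0 \<le> m" "0 \<le> n" "0 < m \<or> 0 < n" "m + n \<le> D" "m < D" "n < D"
proof -
  define m where "m = a mod D"
  define n where "n = b mod D"
  define p1 where "p1 = e1 - (a div D) * u1 - (b div D) * v1"
  define p2 where "p2 = e2 - (a div D) * u2 - (b div D) * v2"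
  have am: "m = a - D * (a div D)" "n = b - D * (b div D)"
    by (simp_all add: m_def n_def minus_mult_div_eq_mod)
  have q1: "D * p1 = m * u1 + n * v1"
  proof -
    have "D * p1 = D * e1 - D * (a div D) * u1 - D * (b div D) * v1"
      by (simp add: p1_def algebra_simps)
    also have "\<dots> = m * u1 + n * v1"
      unfolding h1 am by (simp add: algebra_simps)
    finally show ?thesis .
  qed
  have q2: "D * p2 = m * u2 + n * v2"
  proof -
    have "D * p2 = D * e2 - D * (a div D) * u2 - D * (b div D) * v2"
      by (simp add: p2_def algebra_simps)
    also have "\<dots> = m * u2 + n * v2"
      unfolding h2 am by (simp add: algebra_simps)
    finally show ?thesis .
  qed
  have mr: "0 \<le> m" "m < D" "0 \<le> n" "n < D"
    using D by (simp_all add: m_def n_def)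
  have nz: "0 < m \<or> 0 < n"
  proof (rule ccontr)
    assume "\<not> (0 < m \<or> 0 < n)"
    then have "a mod D = 0" "b mod D = 0"
      using mr unfolding m_def n_def by linarith+
    then show False
      using nd by (simp add: dvd_eq_mod_eq_0)
  qed
  show thesis
  proof (cases "m + n \<le> D")
    case True
    show ?thesis by (rule that[OF q1 q2]) (use True mr nz in auto)
  next
    case False
    text \<open>Otherwise reflect the point through the midpoint of the far side.\<close>
    have "D * (u1 + v1 - p1) = (D - m) * u1 + (D - n) * v1"
      "D * (u2 + v2 - p2) = (D - m) * u2 + (D - n) * v2"
      using q1 q2 by (simp_all add: algebra_simps)
    then show ?thesis by (rule that) (use False mr in auto)
  qed
qed

lemma lattice_combination_exists:
  fixes u1 u2 v1 v2 D :: int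
  assumes D_def: "D = u1 * v2 - u2 * v1" and D: "D \<ge> 2"
  obtains p1 p2 m n where "D * p1 = m * u1 + n * v1" "D * p2 = m * u2 + n * v2"
    "0 \<le> m" "0 \<le> n" "0 < m \<or> 0 < n" "m + n \<le> D" "m < D" "n < D"
proof -
  text \<open>By Cramer's rule, \<open>D\<close> times each unit vector is an integer combination of \<open>u\<close> and \<open>v\<close>.\<close>
  have i1: "D * 1 = v2 * u1 + (- u2) * v1" "D * 0 = v2 * u2 + (- u2) * v2"
    by (simp_all add: D_def algebra_simps)
  have i2: "D * 0 = (- v1) * u1 + u1 * v1" "D * 1 = (- v1) * u2 + u1 * v2"
    by (simp_all add: D_def algebra_simps)
  have "\<not> ((D dvd v2 \<and> D dvd - u2) \<and> (D dvd - v1 \<and> D dvd u1))"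
  proof
    assume "(D dvd v2 \<and> D dvd - u2) \<and> (D dvd - v1 \<and> D dvd u1)"
    then have "D * D dvd u1 * v2" "D * D dvd u2 * v1"
      by (auto intro: mult_dvd_mono)
    then have "D * D dvd D"
      unfolding D_def by (metis D_def dvd_diff)
    then have "D * D \<le> D"
      using D by (simp add: zdvd_imp_le)
    moreover have "2 * D \<le> D * D"
      using D by (intro mult_right_mono) auto
    ultimately show False using D by linarith
  qed
  then consider "\<not> (D dvd v2 \<and> D dvd - u2)" | "\<not> (D dvd - v1 \<and> D dvd u1)"
    by blast
  then show thesis
  proof cases
    case 1
    show thesis by (rule lattice_combination_reduce[OF D i1 1]) (rule that)
  next
    case 2
    show thesis by (rule lattice_combination_reduce[OF D i2 2]) (rule that)
  qed
qed

lemma lattice_point_in_triangle: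
  assumes D: "orient P Q R \<ge> 2"
  obtains X a b where "rp X = (1 - a - b) *\<^sub>R rp P + a *\<^sub>R rp Q + b *\<^sub>R rp R"
    "0 \<le> a" "0 \<le> b" "0 < a \<or> 0 < b" "a < 1" "b < 1" "a + b \<le> 1"
proof -
  define D where "D = orient P Q R"
  obtain p1 p2 m n where h1: "D * p1 = m * (fst Q - fst P) + n * (fst R - fst P)"
      and h2: "D * p2 = m * (snd Q - snd P) + n * (snd R - snd P)"
      and mn: "0 \<le> m" "0 \<le> n" "0 < m \<or> 0 < n" "m + n \<le> D" "m < D" "n < D"
    by (rule lattice_combination_exists[of D "fst Q - fst P" "snd R - snd P" "snd Q - snd P" "fst R - fst P"])
      (use D in \<open>simp_all add: D_def orient_def\<close>)
  define a where "a = real_of_int m / real_of_int D"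
  define b where "b = real_of_int n / real_of_int D"
  have Dpos: "real_of_int D > 0"
    using D D_def by simp
  have solve: "x = a * q + b * r"
    if "real_of_int D * x = real_of_int m * q + real_of_int n * r" for x q r
    using that Dpos unfolding a_def b_def by (simp add: field_simps)
  have "real_of_int p1 = a * (real_of_int (fst Q) - real_of_int (fst P)) + b * (real_of_int (fst R) - real_of_int (fst P))"
       "real_of_int p2 = a * (real_of_int (snd Q) - real_of_int (snd P)) + b * (real_of_int (snd R) - real_of_int (snd P))"
    using arg_cong[OF h1, of real_of_int] arg_cong[OF h2, of real_of_int] by (auto intro!: solve)
  then have "rp (fst P + p1, snd P + p2) = (1 - a - b) *\<^sub>R rp P + a *\<^sub>R rp Q + b *\<^sub>R rp R"
    by (simp add: rp_def prod_eq_iff algebra_simps)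
  moreover have "0 \<le> a" "0 \<le> b" "0 < a \<or> 0 < b" "a < 1" "b < 1"
    using mn Dpos unfolding a_def b_def by (auto simp: divide_simps)
  moreover have "a + b \<le> 1"
    using mn Dpos unfolding a_def b_def by (simp add: divide_simps flip: of_int_add)
  ultimately show thesis by (rule that)
qed

lemma pregion_eq: "pregion vs = - outside (pboundary vs)"
  unfolding pregion_def by (rule union_with_inside)

lemma closed_segment_subset_pregion:
  assumes "valid_edge vs {A, B}"
  shows "closed_segment (rp A) (rp B) \<subseteq> pregion vs"
proof -
  have "rp A \<in> pregion vs" "rp B \<in> pregion vs"
    using valid_edge_doubletonD(2,3)[OF assms] unfolding lattice_pts_def by auto
  then show ?thesis
    using valid_edge_doubletonD(5)[OF assms] closed_segment_eq_open[of "rp A" "rp B"] by blast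
qed

lemma open_segment_no_lattice_point:
  assumes "valid_edge vs {A, B}" "0 < t" "t < 1"
  shows "rp X \<noteq> (1 - t) *\<^sub>R rp A + t *\<^sub>R rp B"
proof
  assume X: "rp X = (1 - t) *\<^sub>R rp A + t *\<^sub>R rp B"
  have "rp A \<noteq> rp B"
    using valid_edge_doubletonD(1)[OF assms(1)] by (simp add: rp_eq_iff)
  then have "rp X \<in> open_segment (rp A) (rp B)"
    unfolding in_segment(2) using X assms(2,3) by blast
  moreover from this have "X \<in> lattice_pts vs"
    using valid_edge_doubletonD(5)[OF assms(1)] unfolding lattice_pts_def by blast
  ultimately show False
    using valid_edge_doubletonD(4)[OF assms(1)] by blast
qed

lemma face_hull_subset_pregion:
  assumes f: "face vs \<sigma> P Q R" and val: "\<forall>e\<in>\<sigma>. valid_edge vs e"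
  shows "convex hull {rp P, rp Q, rp R} \<subseteq> pregion vs"
proof -
  have "closed_segment (rp P) (rp Q) \<union> closed_segment (rp Q) (rp R) \<union> closed_segment (rp P) (rp R)
      \<subseteq> - outside (pboundary vs)"
    using closed_segment_subset_pregion[of vs] val faceD(2-4)[OF f] unfolding pregion_eq by blast
  then show ?thesis
    using convex_hull_3_disjoint_outside[OF faceD(1)[OF f]] unfolding pregion_eq by blast
qed

lemma face_orient_le_1:
  assumes f: "face vs \<sigma> P Q R" and val: "\<forall>e\<in>\<sigma>. valid_edge vs e"
  shows "orient P Q R \<le> 1"
proof (rule ccontr)
  assume "\<not> orient P Q R \<le> 1"
  then have "orient P Q R \<ge> 2" by simp
  then obtain X a b where X: "rp X = (1 - a - b) *\<^sub>R rp P + a *\<^sub>R rp Q + b *\<^sub>R rp R"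
      and ab: "0 \<le> a" "0 \<le> b" "0 < a \<or> 0 < b" "a < 1" "b < 1" "a + b \<le> 1"
    by (rule lattice_point_in_triangle)
  have vPQ: "valid_edge vs {P, Q}" and vQR: "valid_edge vs {Q, R}" and vPR: "valid_edge vs {P, R}"
    using faceD(2-4)[OF f] val by auto
  consider "a = 0" | "b = 0" | "a + b = 1" | "0 < a" "0 < b" "a + b < 1"
    using ab by linarith
  then show False
  proof cases
    case 1
    then show False using X open_segment_no_lattice_point[OF vPR, of b X] ab by auto
  next
    case 2
    then show False using X open_segment_no_lattice_point[OF vPQ, of a X] ab by auto
  next
    case 3
    then have "a = 1 - b" "0 < b"
      using ab by auto
    then have "rp X = (1 - b) *\<^sub>R rp Q + b *\<^sub>R rp R"
      using X by simp
    then show False using open_segment_no_lattice_point[OF vQR, of b X] \<open>0 < b\<close> ab by auto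
  next
    case 4
    have "rp X = rp P + a *\<^sub>R (rp Q - rp P) + b *\<^sub>R (rp R - rp P)"
      using X by (simp add: algebra_simps)
    then have "rp X \<in> interior (convex hull {rp P, rp Q, rp R})"
      using interior_convex_hull_3_point[OF faceD(1)[OF f] 4] by simp
    moreover from this have "X \<in> lattice_pts vs"
      using face_hull_subset_pregion[OF f val] interior_subset unfolding lattice_pts_def by blast
    ultimately show False
      using faceD(5)[OF f] by blast
  qed
qed

lemma face_orient_abs:
  assumes f: "face vs \<sigma> P Q R" and val: "\<forall>e\<in>\<sigma>. valid_edge vs e"
  shows "\<bar>orient P Q R\<bar> = 1"
proof -
  have "orient P Q R \<noteq> 0"
    using faceD(1)[OF f] collinear_if_orient_eq_0 by blast
  moreover have "orient P R Q = - orient P Q R"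
    unfolding orient_def by (simp add: algebra_simps)
  ultimately show ?thesis
    using face_orient_le_1[OF f val] face_orient_le_1[OF face_swap23[OF f] val] by linarith
qed

lemma multiple_of_unimodular_vector:
  fixes z1 z2 r1 r2 w1 w2 :: int
  assumes u: "\<bar>z1 * r2 - z2 * r1\<bar> = 1" and par: "z1 * w2 - z2 * w1 = 0"
  obtains k where "w1 = k * z1" "w2 = k * z2"
proof -
  define e where "e = z1 * r2 - z2 * r1"
  define c where "c = w1 * r2 - w2 * r1"
  have ee: "e * e = 1"
    using u unfolding e_def by (metis abs_mult_self_eq mult_1)
  have "e * w1 = c * z1 + (z1 * w2 - z2 * w1) * r1" "e * w2 = c * z2 + (z1 * w2 - z2 * w1) * r2"
    unfolding e_def c_def by (simp_all add: algebra_simps)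
  then have "e * (e * w1) = e * (c * z1)" "e * (e * w2) = e * (c * z2)"
    using par by simp_all
  then have "w1 = (e * c) * z1" "w2 = (e * c) * z2"
    using ee by (simp_all add: mult.assoc[symmetric])
  then show thesis by (rule that)
qed

lemma abs_add_if_mult_nonneg: "(p::int) * q \<ge> 0 \<Longrightarrow> \<bar>p + q\<bar> = \<bar>p\<bar> + \<bar>q\<bar>"
  by (auto simp: zero_le_mult_iff)

lemma abs_add_if_mult_nonpos: "(p::int) * q \<le> 0 \<Longrightarrow> \<bar>p + q\<bar> = \<bar>\<bar>p\<bar> - \<bar>q\<bar>\<bar>"
  by (auto simp: mult_le_0_iff)

lemma abs_diff_if_mult_nonneg: "(p::int) * q \<ge> 0 \<Longrightarrow> \<bar>p - q\<bar> = \<bar>\<bar>p\<bar> - \<bar>q\<bar>\<bar>"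
  by (auto simp: zero_le_mult_iff)

lemma abs_diff_if_mult_nonpos: "(p::int) * q \<le> 0 \<Longrightarrow> \<bar>p - q\<bar> = \<bar>p\<bar> + \<bar>q\<bar>"
  by (auto simp: mult_le_0_iff)

lemma longer_sum_unimodular_one_sign_change:
  fixes a1 a2 b1 b2 :: int
  assumes d: "\<bar>a1 * b2 - a2 * b1\<bar> = 1"
    and la: "\<bar>a1 + b1\<bar> + \<bar>a2 + b2\<bar> > \<bar>a1\<bar> + \<bar>a2\<bar>"
    and lb: "\<bar>a1 + b1\<bar> + \<bar>a2 + b2\<bar> > \<bar>b1\<bar> + \<bar>b2\<bar>"
    and neg: "a1 * b1 < 0" and pos: "a2 * b2 \<ge> 0"
  shows False
proof -
  have "(a1 * b2) * (a2 * b1) \<le> 0"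
    using neg pos mult_nonpos_nonneg[of "a1 * b1" "a2 * b2"] by (simp add: algebra_simps)
  then have "\<bar>a1\<bar> * \<bar>b2\<bar> + \<bar>a2\<bar> * \<bar>b1\<bar> = 1"
    using d abs_diff_if_mult_nonpos[of "a1 * b2" "a2 * b1"] by (simp add: abs_mult)
  moreover have "\<bar>a1\<bar> \<ge> 1" "\<bar>b1\<bar> \<ge> 1"
    using neg by (auto simp: mult_less_0_iff)
  moreover have "\<bar>\<bar>a1\<bar> - \<bar>b1\<bar>\<bar> + \<bar>a2\<bar> + \<bar>b2\<bar> > \<bar>a1\<bar> + \<bar>a2\<bar>"
    "\<bar>\<bar>a1\<bar> - \<bar>b1\<bar>\<bar> + \<bar>a2\<bar> + \<bar>b2\<bar> > \<bar>b1\<bar> + \<bar>b2\<bar>"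
    using la lb abs_add_if_mult_nonpos[of a1 b1] abs_add_if_mult_nonneg[OF pos] neg by simp_all
  moreover have "\<bar>a1\<bar> * \<bar>b2\<bar> \<ge> \<bar>b2\<bar>" "\<bar>a2\<bar> * \<bar>b1\<bar> \<ge> \<bar>a2\<bar>"
    using calculation(2,3) by (simp_all add: mult_le_cancel_right1 mult_le_cancel_left1)
  ultimately show False
    using abs_ge_zero[of a2] abs_ge_zero[of b2] by (cases "\<bar>a1\<bar> \<ge> \<bar>b1\<bar>") auto
qed

lemma longer_sum_unimodular_two_sign_changes:
  fixes a1 a2 b1 b2 :: int
  assumes d: "\<bar>a1 * b2 - a2 * b1\<bar> = 1"
    and la: "\<bar>a1 + b1\<bar> + \<bar>a2 + b2\<bar> > \<bar>a1\<bar> + \<bar>a2\<bar>"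
    and lb: "\<bar>a1 + b1\<bar> + \<bar>a2 + b2\<bar> > \<bar>b1\<bar> + \<bar>b2\<bar>"
    and neg1: "a1 * b1 < 0" and neg2: "a2 * b2 < 0"
  shows False
proof -
  define p q r s where "p = \<bar>a1\<bar>" "q = \<bar>b1\<bar>" "r = \<bar>a2\<bar>" "s = \<bar>b2\<bar>"
  have "(a1 * b2) * (a2 * b1) = (a1 * b1) * (a2 * b2)"
    by (simp add: algebra_simps)
  also have "\<dots> > 0"
    using neg1 neg2 by (rule mult_neg_neg)
  finally have d': "\<bar>p * s - r * q\<bar> = 1"
    using d abs_diff_if_mult_nonneg[of "a1 * b2" "a2 * b1"] by (simp add: abs_mult p_q_r_s_def)
  have pos: "p \<ge> 1" "q \<ge> 1" "r \<ge> 1" "s \<ge> 1"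
    using neg1 neg2 by (auto simp: mult_less_0_iff p_q_r_s_def)
  have la': "\<bar>p - q\<bar> + \<bar>r - s\<bar> > p + r" and lb': "\<bar>p - q\<bar> + \<bar>r - s\<bar> > q + s"
    using la lb abs_add_if_mult_nonpos[of a1 b1] abs_add_if_mult_nonpos[of a2 b2] neg1 neg2
    by (simp_all add: p_q_r_s_def)
  text \<open>Both length conditions force one of the products \<open>p s\<close>, \<open>r q\<close> to exceed the other by 2.\<close>
  show False
  proof (cases "p \<ge> q")
    case True
    then have "s \<ge> q + 2 * r + 1" "p \<ge> 2 * q + r + 1"
      using la' lb' pos by auto
    then have "p * s \<ge> (2 * q + r + 1) * (q + 2 * r + 1)"
      using pos by (intro mult_mono) auto
    moreover have "(2 * q + r + 1) * (q + 2 * r + 1) = 2 * (q * q) + 5 * (r * q) + 2 * (r * r) + 3 * q + 3 * r + 1"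
      by (simp add: algebra_simps)
    moreover have "q * q \<ge> 0" "r * r \<ge> 0" "r * q \<ge> 0"
      using pos by auto
    ultimately show False
      using d' pos by linarith
  next
    case False
    then have "r \<ge> p + 2 * s + 1" "q \<ge> 2 * p + s + 1"
      using la' lb' pos by auto
    then have "r * q \<ge> (p + 2 * s + 1) * (2 * p + s + 1)"
      using pos by (intro mult_mono) auto
    moreover have "(p + 2 * s + 1) * (2 * p + s + 1) = 2 * (p * p) + 5 * (p * s) + 2 * (s * s) + 3 * p + 3 * s + 1"
      by (simp add: algebra_simps)
    moreover have "p * p \<ge> 0" "s * s \<ge> 0" "p * s \<ge> 0"
      using pos by auto
    ultimately show False
      using d' pos by linarith
  qed
qed

lemma same_quadrant_if_longer_sum:
  fixes a1 a2 b1 b2 :: int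
  assumes d: "\<bar>a1 * b2 - a2 * b1\<bar> = 1"
    and la: "\<bar>a1 + b1\<bar> + \<bar>a2 + b2\<bar> > \<bar>a1\<bar> + \<bar>a2\<bar>"
    and lb: "\<bar>a1 + b1\<bar> + \<bar>a2 + b2\<bar> > \<bar>b1\<bar> + \<bar>b2\<bar>"
  shows "a1 * b1 \<ge> 0" "a2 * b2 \<ge> 0"
proof -
  show "a1 * b1 \<ge> 0"
    using longer_sum_unimodular_one_sign_change[OF d la lb]
      longer_sum_unimodular_two_sign_changes[OF d la lb] by (meson linorder_not_le)
  have d': "\<bar>a2 * b1 - a1 * b2\<bar> = 1"
    using d by linarith
  show "a2 * b2 \<ge> 0"
    using longer_sum_unimodular_one_sign_change[of a2 b1 a1 b2]
      longer_sum_unimodular_two_sign_changes[of a2 b1 a1 b2]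
      d' la lb by (simp add: add.commute) (meson linorder_not_le)
qed

lemma l1_consecutive_combination_ge_min:
  fixes a1 a2 b1 b2 k :: int
  assumes "a1 * b1 \<ge> 0" "a2 * b2 \<ge> 0"
  shows "min (\<bar>a1\<bar> + \<bar>a2\<bar>) (\<bar>b1\<bar> + \<bar>b2\<bar>) \<le> \<bar>(k - 1) * a1 + k * b1\<bar> + \<bar>(k - 1) * a2 + k * b2\<bar>"
proof -
  have k: "(k - 1) * k \<ge> 0"
    by (cases "k \<ge> 1") (auto simp: mult_nonpos_nonpos)
  have "\<bar>(k - 1) * a + k * b\<bar> = \<bar>k - 1\<bar> * \<bar>a\<bar> + \<bar>k\<bar> * \<bar>b\<bar>" if "a * b \<ge> 0" for a b :: int
  proof -
    have "((k - 1) * a) * (k * b) = ((k - 1) * k) * (a * b)"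
      by (simp add: algebra_simps)
    also have "\<dots> \<ge> 0"
      using k that by simp
    finally show ?thesis
      by (simp add: abs_add_if_mult_nonneg abs_mult)
  qed
  then have "\<bar>(k - 1) * a1 + k * b1\<bar> + \<bar>(k - 1) * a2 + k * b2\<bar>
      = \<bar>k - 1\<bar> * (\<bar>a1\<bar> + \<bar>a2\<bar>) + \<bar>k\<bar> * (\<bar>b1\<bar> + \<bar>b2\<bar>)"
    using assms by (simp add: distrib_left)
  moreover have "\<bar>k - 1\<bar> \<ge> 1 \<or> \<bar>k\<bar> \<ge> 1"
    by linarith
  moreover have "x * A \<ge> A" if "x \<ge> 1" "A \<ge> 0" for x A :: int
    using that by (simp add: mult_le_cancel_right1)
  ultimately show ?thesis
    by (smt (verit) abs_ge_zero zero_le_mult_iff)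
qed

text \<open>Arithmetic core of the comparison of two adjacent triangles: in coordinates centred at
  \<open>P\<close>, the common edge is \<open>z\<close>, the apex on one side is \<open>r\<close> and the apex on the other side is \<open>s\<close>.
  Writing \<open>z = s + (z - s)\<close>, unimodularity gives \<open>r = (k - 1) s + k (z - s)\<close> for an integer \<open>k\<close>.\<close>
lemma adjacent_l1_lower_bound:
  fixes z1 z2 r1 r2 s1 s2 :: int
  assumes u: "\<bar>z1 * r2 - z2 * r1\<bar> = 1"
    and opp: "z1 * s2 - z2 * s1 = - (z1 * r2 - z2 * r1)"
    and ls: "\<bar>s1\<bar> + \<bar>s2\<bar> < \<bar>z1\<bar> + \<bar>z2\<bar>"
    and lzs: "\<bar>z1 - s1\<bar> + \<bar>z2 - s2\<bar> < \<bar>z1\<bar> + \<bar>z2\<bar>"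
  shows "min (\<bar>s1\<bar> + \<bar>s2\<bar>) (\<bar>z1 - s1\<bar> + \<bar>z2 - s2\<bar>) \<le> \<bar>r1\<bar> + \<bar>r2\<bar>"
    and "min (\<bar>s1\<bar> + \<bar>s2\<bar>) (\<bar>z1 - s1\<bar> + \<bar>z2 - s2\<bar>) \<le> \<bar>r1 - z1\<bar> + \<bar>r2 - z2\<bar>"
proof -
  have "z1 * (r2 + s2) - z2 * (r1 + s1) = 0"
    using opp by (simp add: algebra_simps)
  then obtain k where k: "r1 + s1 = k * z1" "r2 + s2 = k * z2"
    using multiple_of_unimodular_vector[OF u] by metis
  have "\<bar>s1 * (z2 - s2) - s2 * (z1 - s1)\<bar> = 1"
    using opp u by (simp add: algebra_simps)
  then have sq: "s1 * (z1 - s1) \<ge> 0" "s2 * (z2 - s2) \<ge> 0"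
    using same_quadrant_if_longer_sum[of s1 "z2 - s2" s2 "z1 - s1"]
      ls lzs by simp_all
  have "r1 = (k - 1) * s1 + k * (z1 - s1)" "r2 = (k - 1) * s2 + k * (z2 - s2)"
    using k by (simp_all add: algebra_simps)
  then show "min (\<bar>s1\<bar> + \<bar>s2\<bar>) (\<bar>z1 - s1\<bar> + \<bar>z2 - s2\<bar>) \<le> \<bar>r1\<bar> + \<bar>r2\<bar>"
    using l1_consecutive_combination_ge_min[OF sq, of k] by simp
  have "r1 - z1 = (k - 1 - 1) * s1 + (k - 1) * (z1 - s1)" "r2 - z2 = (k - 1 - 1) * s2 + (k - 1) * (z2 - s2)"
    using k by (simp_all add: algebra_simps)
  then show "min (\<bar>s1\<bar> + \<bar>s2\<bar>) (\<bar>z1 - s1\<bar> + \<bar>z2 - s2\<bar>) \<le> \<bar>r1 - z1\<bar> + \<bar>r2 - z2\<bar>"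
    using l1_consecutive_combination_ge_min[OF sq, of "k - 1"] by simp
qed

text \<open>Two distinct faces sharing the edge \<open>PQ\<close> lie on opposite sides of it: otherwise
  \<open>S = R + k (Q - P)\<close> and one of the edges \<open>PS\<close>, \<open>QS\<close> would cross the interior of \<open>PQR\<close>.\<close>
lemma adjacent_faces_opposite_orient:
  assumes fR: "face vs \<sigma> P Q R" and fS: "face vs \<sigma> P Q S" and RS: "R \<noteq> S"
    and val: "\<forall>e\<in>\<sigma>. valid_edge vs e"
  shows "orient P Q S = - orient P Q R"
proof (rule ccontr)
  assume "orient P Q S \<noteq> - orient P Q R"
  moreover have uR: "\<bar>orient P Q R\<bar> = 1" and "\<bar>orient P Q S\<bar> = 1"
    using face_orient_abs fR fS val by blast+
  ultimately have "orient P Q S = orient P Q R" by linarith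
  then have "(fst Q - fst P) * (snd S - snd R) - (snd Q - snd P) * (fst S - fst R) = 0"
    unfolding orient_def by (simp add: algebra_simps)
  moreover have "\<bar>(fst Q - fst P) * (snd R - snd P) - (snd Q - snd P) * (fst R - fst P)\<bar> = 1"
    using uR unfolding orient_def .
  ultimately obtain k where k: "fst S - fst R = k * (fst Q - fst P)" "snd S - snd R = k * (snd Q - snd P)"
    using multiple_of_unimodular_vector by metis
  have k0: "k \<noteq> 0"
    using k RS by (auto simp: prod_eq_iff)
  have Sk: "rp S = rp R + real_of_int k *\<^sub>R (rp Q - rp P)"
    using k by (simp add: rp_def prod_eq_iff algebra_simps flip: of_int_mult of_int_diff)
  have nc: "\<not> collinear {rp P, rp Q, rp R}"
    using faceD(1)[OF fR] .
  have "rp P \<noteq> rp S" "rp Q \<noteq> rp S"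
    using faceD(1)[OF fS] by (auto simp: collinear_2 insert_commute)
  show False
  proof (cases "k \<ge> 1")
    case True
    define t where "t = 1 / (2 * (real_of_int k + 1))"
    have t: "0 < t" "t < 1" "0 < t * real_of_int k" "t * real_of_int k + t < 1"
      using True unfolding t_def by (auto simp: field_simps)
    define X where "X = (1 - t) *\<^sub>R rp P + t *\<^sub>R rp S"
    have "X \<in> oseg {P, S}"
      unfolding oseg_doubleton in_segment(2) X_def using t \<open>rp P \<noteq> rp S\<close> by blast
    moreover have "X = rp P + (t * real_of_int k) *\<^sub>R (rp Q - rp P) + t *\<^sub>R (rp R - rp P)"
      unfolding X_def Sk by (simp add: algebra_simps)
    then have "X \<in> interior (convex hull {rp P, rp Q, rp R})"
      using interior_convex_hull_3_point[OF nc, of "t * real_of_int k" t] t by simp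
    ultimately show False
      using faceD(6)[OF fR faceD(4)[OF fS]] by blast
  next
    case False
    then have km: "real_of_int k \<le> -1"
      using k0 by simp
    define t where "t = 1 / (2 * (1 - real_of_int k))"
    have t: "0 < t" "t < 1" "0 < 1 + t * (real_of_int k - 1)" "1 + t * (real_of_int k - 1) + t < 1"
      using km unfolding t_def by (auto simp: field_simps)
    define X where "X = (1 - t) *\<^sub>R rp Q + t *\<^sub>R rp S"
    have "X \<in> oseg {Q, S}"
      unfolding oseg_doubleton in_segment(2) X_def using t \<open>rp Q \<noteq> rp S\<close> by blast
    moreover have "X = rp P + (1 + t * (real_of_int k - 1)) *\<^sub>R (rp Q - rp P) + t *\<^sub>R (rp R - rp P)"
      unfolding X_def Sk by (simp add: algebra_simps)
    then have "X \<in> interior (convex hull {rp P, rp Q, rp R})"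
      using interior_convex_hull_3_point[OF nc, of "1 + t * (real_of_int k - 1)" t] t by simp
    ultimately show False
      using faceD(6)[OF fR faceD(3)[OF fS]] by blast
  qed
qed

lemma adjacent_faces_l1_bound:
  assumes fR: "face vs \<sigma> P Q R" and fS: "face vs \<sigma> P Q S" and RS: "R \<noteq> S"
    and val: "\<forall>e\<in>\<sigma>. valid_edge vs e"
    and lPS: "l1len {P, S} < l1len {P, Q}" and lQS: "l1len {Q, S} < l1len {P, Q}"
  shows "min (l1len {P, S}) (l1len {Q, S}) \<le> l1len {P, R}"
    and "min (l1len {P, S}) (l1len {Q, S}) \<le> l1len {Q, R}"
proof -
  define z1 z2 where "z1 = fst Q - fst P" "z2 = snd Q - snd P"
  define r1 r2 where "r1 = fst R - fst P" "r2 = snd R - snd P"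
  define s1 s2 where "s1 = fst S - fst P" "s2 = snd S - snd P"
  have l1: "l1len {P, Q} = \<bar>z1\<bar> + \<bar>z2\<bar>" "l1len {P, R} = \<bar>r1\<bar> + \<bar>r2\<bar>"
    "l1len {P, S} = \<bar>s1\<bar> + \<bar>s2\<bar>" "l1len {Q, R} = \<bar>r1 - z1\<bar> + \<bar>r2 - z2\<bar>"
    "l1len {Q, S} = \<bar>z1 - s1\<bar> + \<bar>z2 - s2\<bar>"
    unfolding l1len_doubleton z1_z2_def r1_r2_def s1_s2_def by (simp_all add: abs_minus_commute)
  have "\<bar>z1 * r2 - z2 * r1\<bar> = 1"
    using face_orient_abs[OF fR val] unfolding orient_def z1_z2_def r1_r2_def .
  moreover have "z1 * s2 - z2 * s1 = - (z1 * r2 - z2 * r1)"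
    using adjacent_faces_opposite_orient[OF fR fS RS val]
    unfolding orient_def z1_z2_def r1_r2_def s1_s2_def .
  ultimately show "min (l1len {P, S}) (l1len {Q, S}) \<le> l1len {P, R}"
    and "min (l1len {P, S}) (l1len {Q, S}) \<le> l1len {Q, R}"
    using adjacent_l1_lower_bound lPS lQS unfolding l1 by blast+
qed

lemma adjacent_tri_Min_le:
  assumes val: "\<forall>e\<in>\<sigma>. valid_edge vs e"
    and tA: "tri_of vs \<sigma> A" and tB: "tri_of vs \<sigma> B" and AB: "A \<noteq> B"
    and eA: "e \<in> A" and eB: "e \<in> B" and lg: "longest B e"
  shows "Min (l1len ` B) \<le> Min (l1len ` A)"
proof -
  obtain P Q R where e: "e = {P, Q}" and A: "A = {{P, Q}, {Q, R}, {P, R}}" and fR: "face vs \<sigma> P Q R"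
    using tri_of_edge_face[OF tA eA] .
  obtain P' Q' S where e': "e = {P', Q'}" and B': "B = {{P', Q'}, {Q', S}, {P', S}}"
      and fS': "face vs \<sigma> P' Q' S"
    using tri_of_edge_face[OF tB eB] .
  have "face vs \<sigma> P Q S \<and> B = {{P, Q}, {Q, S}, {P, S}}"
  proof (cases "P' = P")
    case True
    then show ?thesis using e e' B' fS' by (auto simp: doubleton_eq_iff)
  next
    case False
    then have "P' = Q" "Q' = P"
      using e e' by (auto simp: doubleton_eq_iff)
    then show ?thesis using B' face_swap12[OF fS'] by (auto simp: insert_commute)
  qed
  then have fS: "face vs \<sigma> P Q S" and B: "B = {{P, Q}, {Q, S}, {P, S}}"
    by auto
  have "S \<notin> {P, Q}"
    using faceD(1)[OF fS] by (auto simp: collinear_2 insert_commute)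
  then have "{P, S} \<noteq> {P, Q}" "{Q, S} \<noteq> {P, Q}"
    by (auto simp: doubleton_eq_iff)
  then have "l1len {P, S} < l1len {P, Q}" "l1len {Q, S} < l1len {P, Q}"
    using lg unfolding longest_def e B by auto
  moreover have "R \<noteq> S"
    using AB A B by blast
  ultimately have "min (l1len {P, S}) (l1len {Q, S}) \<le> l1len {P, R}"
    "min (l1len {P, S}) (l1len {Q, S}) \<le> l1len {Q, R}"
    "min (l1len {P, S}) (l1len {Q, S}) \<le> l1len {P, Q}"
    using adjacent_faces_l1_bound[OF fR fS _ val] by auto
  moreover have "Min (l1len ` B) \<le> min (l1len {P, S}) (l1len {Q, S})"
    unfolding B by (simp add: min_def)
  ultimately show ?thesis
    unfolding A by (simp add: min_def)
qed

lemma infl_parent_longest: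
  assumes "(u, v) \<in> infl vs \<sigma> x"
    and root_longest: "\<And>T. tri_of vs \<sigma> T \<Longrightarrow> edge_at \<sigma> x \<in> T \<Longrightarrow> longest T (edge_at \<sigma> x)"
  obtains B f where "tri_of vs \<sigma> B" "edge_at \<sigma> u \<in> B" "longest B (edge_at \<sigma> u)"
    "f \<in> B" "f \<noteq> edge_at \<sigma> u" "v = mid f"
  using assms(1)
proof cases
  case (root T f)
  then show thesis using that root_longest by blast
next
  case (step z T f)
  then show thesis using that by blast
qed

lemma not_longest_if_other_longest: "longest B g \<Longrightarrow> f \<in> B \<Longrightarrow> f \<noteq> g \<Longrightarrow> \<not> longest B f"
  unfolding longest_def by force

lemma infl_child_Min_le:
  assumes val: "\<forall>e\<in>\<sigma>. valid_edge vs e" and pd: "pairwise_disj \<sigma>"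
    and root_longest: "\<And>T. tri_of vs \<sigma> T \<Longrightarrow> edge_at \<sigma> x \<in> T \<Longrightarrow> longest T (edge_at \<sigma> x)"
    and uv: "(u, v) \<in> infl vs \<sigma> x" and A: "tri_of vs \<sigma> A" "edge_at \<sigma> u \<in> A"
  shows "\<exists>B. tri_of vs \<sigma> B \<and> edge_at \<sigma> v \<in> B \<and> \<not> longest B (edge_at \<sigma> v)
           \<and> Min (l1len ` B) \<le> Min (l1len ` A)"
proof -
  obtain B f where B: "tri_of vs \<sigma> B" "edge_at \<sigma> u \<in> B" "longest B (edge_at \<sigma> u)"
      and f: "f \<in> B" "f \<noteq> edge_at \<sigma> u" "v = mid f"
    using infl_parent_longest[OF uv root_longest] .
  have "f \<in> \<sigma>"
    using tri_of_subset[OF B(1)] f(1) by blast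
  then have v: "edge_at \<sigma> v = f"
    using edge_at_mid[OF val pd] f(3) by simp
  have "Min (l1len ` B) \<le> Min (l1len ` A)"
  proof (cases "A = B")
    case False
    then show ?thesis by (rule adjacent_tri_Min_le[OF val A(1) B(1) _ A(2) B(2,3)])
  qed simp
  moreover have "\<not> longest B f"
    by (rule not_longest_if_other_longest[OF B(3) f(1,2)])
  ultimately show ?thesis
    unfolding v using B(1) f(1) by blast
qed

lemma infl_descendant_Min_le:
  assumes val: "\<forall>e\<in>\<sigma>. valid_edge vs e" and pd: "pairwise_disj \<sigma>"
    and root_longest: "\<And>T. tri_of vs \<sigma> T \<Longrightarrow> edge_at \<sigma> x \<in> T \<Longrightarrow> longest T (edge_at \<sigma> x)"
    and T1: "tri_of vs \<sigma> T1" "edge_at \<sigma> y \<in> T1"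
    and path: "(y, v) \<in> (infl vs \<sigma> x)\<^sup>+"
  shows "\<exists>A. tri_of vs \<sigma> A \<and> edge_at \<sigma> v \<in> A \<and> \<not> longest A (edge_at \<sigma> v)
           \<and> Min (l1len ` A) \<le> Min (l1len ` T1)"
  using path
proof (induction rule: trancl_induct)
  case (base v)
  show ?case by (rule infl_child_Min_le[OF val pd root_longest base T1])
next
  case (step v v')
  then obtain A where A: "tri_of vs \<sigma> A" "edge_at \<sigma> v \<in> A" "Min (l1len ` A) \<le> Min (l1len ` T1)"
    by blast
  obtain B where B: "tri_of vs \<sigma> B" "edge_at \<sigma> v' \<in> B" "\<not> longest B (edge_at \<sigma> v')"
      "Min (l1len ` B) \<le> Min (l1len ` A)"
    using infl_child_Min_le[OF val pd root_longest step.hyps(2) A(1,2)] by blast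
  have "Min (l1len ` B) \<le> Min (l1len ` T1)"
    using A(3) B(4) by linarith
  then show ?case
    using B(1-3) by blast
qed

theorem mainTheorem5:
  fixes vs :: "lpt list" and \<xi> \<sigma> T1 T2 :: "lpt set set"
    and x y1 z1 w1 y2 z2 w2 :: "real \<times> real"
  assumes "lattice_polygon vs"
    and "boundary_condition vs \<xi>"
    and "\<sigma> \<in> Omega vs \<xi>"
    and "x \<in> F_dec vs \<sigma> \<union> F_diag vs \<sigma>"
    and "tri_of vs \<sigma> T1" and "T1 = {edge_at \<sigma> y1, edge_at \<sigma> z1, edge_at \<sigma> w1}"
    and "l1len (edge_at \<sigma> y1) > l1len (edge_at \<sigma> z1)"
    and "l1len (edge_at \<sigma> z1) \<ge> l1len (edge_at \<sigma> w1)"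
    and "tri_of vs \<sigma> T2" and "T2 = {edge_at \<sigma> y2, edge_at \<sigma> z2, edge_at \<sigma> w2}"
    and "l1len (edge_at \<sigma> y2) > l1len (edge_at \<sigma> z2)"
    and "l1len (edge_at \<sigma> z2) \<ge> l1len (edge_at \<sigma> w2)"
    and "{y1, z1, w1, y2, z2, w2} \<subseteq> infl_nodes vs \<sigma> x"
    and "(y1, z1) \<in> infl vs \<sigma> x" and "(y1, w1) \<in> infl vs \<sigma> x"
    and "(y2, z2) \<in> infl vs \<sigma> x" and "(y2, w2) \<in> infl vs \<sigma> x"
    and "(y1, y2) \<in> (infl vs \<sigma> x)\<^sup>+"
  shows "l1len (edge_at \<sigma> w1) \<ge> l1len (edge_at \<sigma> w2)"
proof -
  have val: "\<forall>e\<in>\<sigma>. valid_edge vs e" and pd: "pairwise_disj \<sigma>"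
    using assms(3) unfolding Omega_def triangulation_def by simp_all
  have root_longest: "\<And>T. tri_of vs \<sigma> T \<Longrightarrow> edge_at \<sigma> x \<in> T \<Longrightarrow> longest T (edge_at \<sigma> x)"
    using assms(4) unfolding F_dec_def F_diag_def by blast
  obtain A where A: "tri_of vs \<sigma> A" "edge_at \<sigma> y2 \<in> A" "\<not> longest A (edge_at \<sigma> y2)"
      "Min (l1len ` A) \<le> Min (l1len ` T1)"
    using infl_descendant_Min_le[OF val pd root_longest assms(5) _ assms(18)] assms(6) by blast
  have y2: "edge_at \<sigma> y2 \<in> T2" "longest T2 (edge_at \<sigma> y2)"
    using assms(10-12) unfolding longest_def by auto
  then have "Min (l1len ` T2) \<le> Min (l1len ` A)"
    using adjacent_tri_Min_le[OF val A(1) assms(9) _ A(2)] A(3) by blast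
  moreover have "Min (l1len ` T1) = l1len (edge_at \<sigma> w1)" "Min (l1len ` T2) = l1len (edge_at \<sigma> w2)"
    using assms(6-8,10-12) by simp_all
  ultimately show ?thesis
    using A(4) by linarith
qed

end
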